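(* Let $\Gamma$ be a $\mathbb{Z}^d$-periodic graph with generic dispersion polynomial $\Phi$ and let $\eta\in\mathbb{Z}^{d+1}$. Then $\eta$ exposes a vertical face of $\mathcal{N}(\Phi)$ if and only if the initial graph $\mathrm{in}_\eta\widehat{\Gamma}$ has a vertex $v$ carrying both loops, the one labeled $\lambda$ and the one labeled $-V(v)$. Moreover, such a vector $\eta$ is horizontal (its last coordinate is $0$).
   Context: A $\mathbb{Z}^d$-periodic graph $\Gamma$ is a simple undirected graph of bounded degree with a free $\mathbb{Z}^d$-action $(\alpha,v)\mapsto\alpha+v$ by automorphisms with finitely many vertex and edge orbits; $W$ is a set of vertex orbit representatives. With independent indeterminates $e$ (one per edge orbit) and $V(v)$ ($v\in W$), the generic Floquet matrix $H$ has $(v,u)$ entry $\delta_{v,u}V(v)-\sum_{\alpha: v\sim\alpha+u}e_{(v,\alpha+u)}z^\alpha$ and $\Phi=\det(\lambda I_W-H)$, viewed as a polynomial in $(z,\lambda)$ with coefficients in $\mathbb{C}[e,V]$; $\mathcal{N}(\Phi)\subset\mathbb{R}^{d+1}$ is the convex hull of its $(z,\lambda)$-exponent vectors. A vector $\eta$ exposes the face on which $x\mapsto\eta\cdot x$ is minimized; a face is vertical if it contains a segment parallel to $(0,\dots,0,1)$. The directed labeled multigraph $\widehat{\Gamma}$ has vertex set $W$, two loops at each $v$ labeled $\lambda$ and $-V(v)$, and for each $u,v\in W$, $\alpha\in\mathbb{Z}^d$ with $v\sim\alpha+u$ a directed edge $v\leftarrow u$ labeled $e_{(v,\alpha+u)}z^\alpha$.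 A cycle cover $\zeta$ is a set of edges such that each vertex is the tail of exactly one and the head of exactly one edge of $\zeta$; $\mathrm{wt}(\zeta)$ is the product of its labels and $\eta(\zeta)$ is $\eta$ applied to the $(z,\lambda)$-exponent of $\mathrm{wt}(\zeta)$. The initial graph $\mathrm{in}_\eta\widehat{\Gamma}$ is the subgraph on $W$ of those edges lying in some cycle cover $\zeta$ of $\widehat{\Gamma}$ with $\eta(\zeta)$ minimal among all cycle covers. *)

theory Defs
  imports "HOL-Analysis.Analysis" "HOL-Library.Poly_Mapping"
begin

text \<open>A Z^d-periodic graph is encoded (up to isomorphism) by a finite set W of vertex
orbit representatives and the finite set E of triples (v, a, u) with v in W, u in W,
a in Z^d such that v is adjacent to a+u.  The vertex set is Z^d x W, and
(b, v) ~ (c, u) iff (v, c - b, u) in E.  Symmetry, simplicity (no loops), bounded degree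
and finiteness of the orbits translate into the conditions below.  The dimension d is
the cardinality of the finite index type 'd.\<close>

type_synonym ('d, 'v) etriple = "'v \<times> (int ^ 'd) \<times> 'v"

definition periodic_graph :: "'v set \<Rightarrow> ('d::finite, 'v) etriple set \<Rightarrow> bool" where
  "periodic_graph W E \<longleftrightarrow> finite W \<and> finite E \<and>
     (\<forall>v a u. (v, a, u) \<in> E \<longrightarrow> v \<in> W \<and> u \<in> W) \<and>
     (\<forall>v a u. (v, a, u) \<in> E \<longrightarrow> (u, - a, v) \<in> E) \<and>
     (\<forall>v. (v, 0, v) \<notin> E)"

definition adj :: "('d::finite, 'v) etriple set \<Rightarrow> (int ^ 'd) \<times> 'v \<Rightarrow> (int ^ 'd) \<times> 'v \<Rightarrow> bool" where
  "adj E x y \<longleftrightarrow> (snd x, fst y - fst x, snd y) \<in> E"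

text \<open>The edge orbit of the edge {v, a+u}: it is represented by the two triples
describing it from either endpoint.\<close>

definition edge_orbit :: "('d::finite, 'v) etriple \<Rightarrow> ('d, 'v) etriple set" where
  "edge_orbit t = (case t of (v, a, u) \<Rightarrow> {(v, a, u), (u, - a, v)})"

datatype ('d, 'v) var = Zv 'd | Lam | Ev "('d, 'v) etriple set" | Vv 'v

type_synonym ('d, 'v) mono = "('d, 'v) var \<Rightarrow>\<^sub>0 int"
type_synonym ('d, 'v) lpoly = "('d, 'v) mono \<Rightarrow>\<^sub>0 complex"

definition var_mono :: "('d, 'v) var \<Rightarrow> ('d, 'v) mono" where
  "var_mono x = Poly_Mapping.single x 1"

definition z_mono :: "int ^ 'd \<Rightarrow> ('d::finite, 'v) mono" where
  "z_mono a = (\<Sum>i\<in>UNIV. Poly_Mapping.single (Zv i) (a $ i))"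

definition monomial :: "complex \<Rightarrow> ('d, 'v) mono \<Rightarrow> ('d, 'v) lpoly" where
  "monomial c m = Poly_Mapping.single m c"

definition floquet :: "('d::finite, 'v) etriple set \<Rightarrow> 'v \<Rightarrow> 'v \<Rightarrow> ('d, 'v) lpoly" where
  "floquet E v u =
     (if v = u then monomial 1 (var_mono (Vv v)) else 0)
     - (\<Sum>a\<in>{a. (v, a, u) \<in> E}. monomial 1 (var_mono (Ev (edge_orbit (v, a, u))) + z_mono a))"

definition char_mat :: "('d::finite, 'v) etriple set \<Rightarrow> 'v \<Rightarrow> 'v \<Rightarrow> ('d, 'v) lpoly" where
  "char_mat E v u = (if v = u then monomial 1 (var_mono Lam) else 0) - floquet E v u"

definition det_on :: "'v set \<Rightarrow> ('v \<Rightarrow> 'v \<Rightarrow> 'a::comm_ring_1) \<Rightarrow> 'a" where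
  "det_on W M = (\<Sum>p\<in>{p. p permutes W}. of_int (sign p) * (\<Prod>v\<in>W. M v (p v)))"

definition dispersion :: "'v set \<Rightarrow> ('d::finite, 'v) etriple set \<Rightarrow> ('d, 'v) lpoly" where
  "dispersion W E = det_on W (char_mat E)"

text \<open>(z, lambda)-exponent of a monomial, and the Newton polytope in R^(d+1)
of a polynomial viewed as a polynomial in (z, lambda) with coefficients in C[e, V].\<close>

definition zl_exp :: "('d::finite, 'v) mono \<Rightarrow> (int ^ 'd) \<times> int" where
  "zl_exp m = ((\<chi> i. Poly_Mapping.lookup m (Zv i)), Poly_Mapping.lookup m Lam)"

definition to_real :: "(int ^ 'd) \<times> int \<Rightarrow> (real ^ 'd::finite) \<times> real" where
  "to_real x = ((\<chi> i. real_of_int (fst x $ i)), real_of_int (snd x))"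

definition newton_polytope :: "('d::finite, 'v) lpoly \<Rightarrow> ((real ^ 'd) \<times> real) set" where
  "newton_polytope P = convex hull ((\<lambda>m. to_real (zl_exp m)) ` Poly_Mapping.keys P)"

definition exposed_face :: "(int ^ 'd::finite) \<times> int \<Rightarrow> ((real ^ 'd) \<times> real) set \<Rightarrow> ((real ^ 'd) \<times> real) set" where
  "exposed_face eta N = {x \<in> N. \<forall>y\<in>N. inner (to_real eta) x \<le> inner (to_real eta) y}"

definition vertical :: "((real ^ 'd::finite) \<times> real) set \<Rightarrow> bool" where
  "vertical F \<longleftrightarrow> (\<exists>x t. t \<noteq> 0 \<and> x \<in> F \<and> x + (0, t) \<in> F)"

definition exposes_vertical_face :: "(int ^ 'd::finite) \<times> int \<Rightarrow> ((real ^ 'd) \<times> real) set \<Rightarrow> bool" where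
  "exposes_vertical_face eta N \<longleftrightarrow> vertical (exposed_face eta N)"

text \<open>Edges: the loop labeled lambda at v, the loop labeled -V(v) at v, and for each
(v, a, u) in E the edge v <- u labeled e_(v,a+u) z^a (head v, tail u).\<close>

datatype ('d, 'v) hedge = LamLoop 'v | VLoop 'v | Edge 'v "int ^ 'd" 'v

fun head :: "('d::finite, 'v) hedge \<Rightarrow> 'v" where
  "head (LamLoop v) = v" | "head (VLoop v) = v" | "head (Edge v a u) = v"

fun tail :: "('d::finite, 'v) hedge \<Rightarrow> 'v" where
  "tail (LamLoop v) = v" | "tail (VLoop v) = v" | "tail (Edge v a u) = u"

definition hat_edges :: "'v set \<Rightarrow> ('d::finite, 'v) etriple set \<Rightarrow> ('d, 'v) hedge set" where
  "hat_edges W E = LamLoop ` W \<union> VLoop ` W \<union> {Edge v a u | v a u. (v, a, u) \<in> E}"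

fun label_coeff :: "('d::finite, 'v) hedge \<Rightarrow> complex" where
  "label_coeff (LamLoop v) = 1" | "label_coeff (VLoop v) = -1" | "label_coeff (Edge v a u) = 1"

fun label_mono :: "('d::finite, 'v) hedge \<Rightarrow> ('d, 'v) mono" where
  "label_mono (LamLoop v) = var_mono Lam"
| "label_mono (VLoop v) = var_mono (Vv v)"
| "label_mono (Edge v a u) = var_mono (Ev (edge_orbit (v, a, u))) + z_mono a"

definition label :: "('d::finite, 'v) hedge \<Rightarrow> ('d, 'v) lpoly" where
  "label x = monomial (label_coeff x) (label_mono x)"

definition cycle_cover :: "'v set \<Rightarrow> ('d::finite, 'v) etriple set \<Rightarrow> ('d, 'v) hedge set \<Rightarrow> bool" where
  "cycle_cover W E Z \<longleftrightarrow> Z \<subseteq> hat_edges W E \<and>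
     (\<forall>v\<in>W. \<exists>!x. x \<in> Z \<and> tail x = v) \<and> (\<forall>v\<in>W. \<exists>!x. x \<in> Z \<and> head x = v)"

definition wt :: "('d::finite, 'v) hedge set \<Rightarrow> ('d, 'v) lpoly" where
  "wt Z = (\<Prod>x\<in>Z. label x)"

definition wt_zl_exp :: "('d::finite, 'v) hedge set \<Rightarrow> (int ^ 'd) \<times> int" where
  "wt_zl_exp Z = zl_exp (\<Sum>x\<in>Z. label_mono x)"

definition int_dot :: "(int ^ 'd::finite) \<times> int \<Rightarrow> (int ^ 'd) \<times> int \<Rightarrow> int" where
  "int_dot eta x = (\<Sum>i\<in>UNIV. fst eta $ i * fst x $ i) + snd eta * snd x"

definition eta_val :: "(int ^ 'd::finite) \<times> int \<Rightarrow> ('d, 'v) hedge set \<Rightarrow> int" where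
  "eta_val eta Z = int_dot eta (wt_zl_exp Z)"

definition initial_graph :: "'v set \<Rightarrow> ('d::finite, 'v) etriple set \<Rightarrow> (int ^ 'd) \<times> int \<Rightarrow> ('d, 'v) hedge set" where
  "initial_graph W E eta = {x \<in> hat_edges W E. \<exists>Z. cycle_cover W E Z \<and> x \<in> Z \<and>
      (\<forall>Z'. cycle_cover W E Z' \<longrightarrow> eta_val eta Z \<le> eta_val eta Z')}"

end

theory Submission
  imports Defs "HOL-Combinatorics.Permutations"
begin

(* Expanding det(lambda I - H) by the Leibniz formula and every entry into edge labels writes
   Phi as a sum over cycle covers of hat Gamma, without cancellation: the monomial of a cover
   records its V-loops and the edge orbits it uses, hence the undirected cycles of the underlying
   permutation, and permutations with the same undirected cycles have the same sign. So N(Phi) is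
   the convex hull of the exponents of cycle covers, and the face exposed by eta is spanned by the
   eta-minimal covers. Exchanging the lambda-loop at v for the -V(v)-loop lowers the exponent by
   (0,...,0,1), changing eta by its last coordinate. A vertical face forces that coordinate to
   vanish and contains a minimal cover through some lambda-loop, whose exchange is again minimal;
   conversely, minimal covers through both loops at v force it to vanish and give two points of the
   face that differ by (0,...,0,1). *)

section \<open>Permutations with the same undirected cycles\<close>

lemma sign_eq_if_inverse_where_different:
  assumes fin: "finite W" and p: "p permutes W" and q: "q permutes W"
    and inverse: "\<And>v. v \<in> W \<Longrightarrow> q v \<noteq> p v \<Longrightarrow> p (q v) = v \<and> q (p v) = v"
  shows "sign p = sign q"
proof -
  define R where "R = {v \<in> W. q v \<noteq> p v}"
  have pq_R: "p (q v) = v" "q (p v) = v" if "v \<in> R" for v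
    using that inverse by (auto simp: R_def)
  have R_closed: "p v \<in> R" "q v \<in> R" if "v \<in> R" for v
  proof -
    have "p (p v) \<noteq> p (q v)" "q (q v) \<noteq> q (p v)"
      using that by (auto simp: R_def permutes_inj[OF p, THEN inj_eq] permutes_inj[OF q, THEN inj_eq])
    then show "p v \<in> R" "q v \<in> R"
      using that pq_R[OF that] by (auto simp: R_def permutes_in_image[OF p] permutes_in_image[OF q])
  qed
  (* On R the permutation q is the inverse of p, so with r = q on R and r = id elsewhere,
     q = r o r o p. *)
  define r where "r x = (if x \<in> R then q x else x)" for x
  have "bij_betw r R R"
    by (rule bij_betw_byWitness[where f' = p]) (simp_all add: r_def pq_R R_closed image_subset_iff)
  then have "r permutes R"
    by (rule bij_imp_permutes) (simp add: r_def)
  moreover have "finite R"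
    using fin by (simp add: R_def)
  ultimately have perm_r: "permutation r"
    by (auto simp: permutation_permutes)
  have p_R_iff: "p x \<in> R \<longleftrightarrow> x \<in> R" for x
  proof
    assume "p x \<in> R"
    then have "p (q (p x)) = p x" "q (p x) \<in> R"
      using pq_R(1) R_closed(2) by blast+
    then show "x \<in> R"
      using permutes_inj[OF p] by (metis injD)
  qed (rule R_closed(1))
  have "q x = p x" if "x \<notin> R" for x
    using that p q by (cases "x \<in> W") (auto simp: R_def permutes_not_in)
  then have "q = r \<circ> r \<circ> p"
    by (auto simp: fun_eq_iff r_def p_R_iff pq_R)
  moreover have "permutation p"
    using fin p by (auto simp: permutation_permutes)
  ultimately have "sign q = sign r * sign r * sign p"
    using perm_r by (simp add: sign_compose permutation_compose)
  then show ?thesis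
    by simp
qed

lemma same_undirected_edges_imp_inverse:
  assumes "(\<lambda>v. {v, p v}) ` W = (\<lambda>v. {v, q v}) ` W" "v \<in> W" "q v \<noteq> p v"
  shows "p (q v) = v"
proof -
  obtain w where "w \<in> W" "{v, q v} = {w, p w}"
    using assms(1,2) by blast
  then show ?thesis
    using assms(3) by (auto simp: doubleton_eq_iff)
qed

lemma sign_eq_if_same_undirected_edges:
  assumes "finite W" "p permutes W" "q permutes W"
    and edges: "(\<lambda>v. {v, p v}) ` W = (\<lambda>v. {v, q v}) ` W"
  shows "sign p = sign q"
proof (rule sign_eq_if_inverse_where_different[OF assms(1-3)])
  fix v assume "v \<in> W" "q v \<noteq> p v"
  then show "p (q v) = v \<and> q (p v) = v"
    using same_undirected_edges_imp_inverse[OF edges] same_undirected_edges_imp_inverse[OF edges[symmetric]]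
    by auto
qed

section \<open>Convex hulls of finite sets\<close>

lemma convex_hull_halfspace_ge:
  assumes "\<forall>p\<in>P. c \<le> a \<bullet> p" "y \<in> convex hull P"
  shows "c \<le> a \<bullet> y"
proof -
  have "convex hull P \<subseteq> {x. c \<le> a \<bullet> x}"
    using assms(1) by (intro hull_minimal) (auto simp: convex_halfspace_ge)
  then show ?thesis
    using assms(2) by blast
qed

lemma convex_hull_minimizer_witness:
  fixes P :: "'a::real_inner set"
  assumes fin: "finite P" and y: "y \<in> convex hull P"
    and min: "\<forall>p\<in>P. e \<bullet> y \<le> e \<bullet> p" and pos: "0 < a \<bullet> y"
  obtains p where "p \<in> P" "e \<bullet> p = e \<bullet> y" "0 < a \<bullet> p"
proof -
  obtain u where u: "\<forall>p\<in>P. 0 \<le> u p" "sum u P = 1" "(\<Sum>p\<in>P. u p *\<^sub>R p) = y"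
    using y by (auto simp: convex_hull_finite[OF fin])
  have "(\<Sum>p\<in>P. u p * (e \<bullet> p - e \<bullet> y)) = e \<bullet> y - sum u P * (e \<bullet> y)"
    by (simp add: right_diff_distrib sum_subtractf sum_distrib_right inner_sum_right flip: u(3))
  then have "(\<Sum>p\<in>P. u p * (e \<bullet> p - e \<bullet> y)) = 0"
    using u(2) by simp
  moreover have "\<forall>p\<in>P. 0 \<le> u p * (e \<bullet> p - e \<bullet> y)"
    using u(1) min by simp
  ultimately have tight: "u p = 0 \<or> e \<bullet> p = e \<bullet> y" if "p \<in> P" for p
    using that fin by (simp add: sum_nonneg_eq_0_iff)
  have "a \<bullet> y = (\<Sum>p\<in>P. u p * (a \<bullet> p))"
    by (simp add: inner_sum_right flip: u(3))
  then have "\<not> (\<forall>p\<in>P. u p * (a \<bullet> p) \<le> 0)"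
    using pos sum_nonpos[of P "\<lambda>p. u p * (a \<bullet> p)"] by force
  then obtain p where p: "p \<in> P" "0 < u p * (a \<bullet> p)"
    by (auto simp: not_le)
  then have "u p \<noteq> 0"
    by auto
  moreover have "0 < a \<bullet> p"
    using p u(1) zero_less_mult_pos[of "u p" "a \<bullet> p"] \<open>u p \<noteq> 0\<close> by force
  ultimately show ?thesis
    using that p(1) tight[OF p(1)] by blast
qed

section \<open>Expansion of the dispersion polynomial\<close>

lemma prod_single:
  assumes "finite A"
  shows "(\<Prod>i\<in>A. Poly_Mapping.single (m i) (c i)) =
    Poly_Mapping.single (\<Sum>i\<in>A. m i) (\<Prod>i\<in>A. c i :: 'b::comm_semiring_1)"
  using assms by (induction A rule: finite_induct) (simp_all add: mult_single)

lemma finite_hat_edges: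
  assumes "periodic_graph W E"
  shows "finite (hat_edges W E)"
proof -
  have "{Edge v a u | v a u. (v, a, u) \<in> E} = (\<lambda>(v, a, u). Edge v a u) ` E"
    by force
  then show ?thesis
    using assms by (auto simp: periodic_graph_def hat_edges_def)
qed

lemma hat_edges_ends_in:
  assumes "periodic_graph W E" "x \<in> hat_edges W E"
  shows "head x \<in> W" "tail x \<in> W"
  using assms by (auto simp: periodic_graph_def hat_edges_def)

definition hat_edges_between ::
    "'v set \<Rightarrow> ('d::finite, 'v) etriple set \<Rightarrow> 'v \<Rightarrow> 'v \<Rightarrow> ('d, 'v) hedge set" where
  "hat_edges_between W E v u = {x \<in> hat_edges W E. head x = v \<and> tail x = u}"

lemma char_mat_eq_sum_labels:
  fixes E :: "('d::finite, 'v) etriple set"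
  assumes pg: "periodic_graph W E" and "v \<in> W" "u \<in> W"
  shows "char_mat E v u = (\<Sum>x\<in>hat_edges_between W E v u. label x)"
proof -
  define A where "A = {a. (v, a, u) \<in> E}"
  define L :: "('d, 'v) hedge set" where "L = (if v = u then {LamLoop v, VLoop v} else {})"
  have "A \<subseteq> (\<lambda>t. fst (snd t)) ` E"
    by (force simp: A_def)
  then have "finite A"
    using pg finite_subset by (auto simp: periodic_graph_def)
  moreover have "hat_edges_between W E v u = L \<union> (\<lambda>a. Edge v a u) ` A"
    "L \<inter> (\<lambda>a. Edge v a u) ` A = {}" "finite L"
    using \<open>v \<in> W\<close> \<open>u \<in> W\<close> by (auto simp: hat_edges_between_def hat_edges_def L_def A_def)
  ultimately have "(\<Sum>x\<in>hat_edges_between W E v u. label x) =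
      (\<Sum>x\<in>L. label x) + (\<Sum>a\<in>A. label (Edge v a u))"
    by (simp add: sum.union_disjoint sum.reindex inj_on_def)
  also have "\<dots> = char_mat E v u"
    by (simp add: char_mat_def floquet_def A_def L_def label_def monomial_def single_uminus)
  finally show ?thesis ..
qed

text \<open>A pair (p, f) indexes one term of det(lambda I - H) once every entry char_mat E v (p v) of
the Leibniz formula is expanded into the labels of the edges v <- p v of hat Gamma.\<close>

definition edge_choices ::
    "'v set \<Rightarrow> ('d::finite, 'v) etriple set \<Rightarrow> (('v \<Rightarrow> 'v) \<times> ('v \<Rightarrow> ('d, 'v) hedge)) set" where
  "edge_choices W E = Sigma {p. p permutes W} (\<lambda>p. PiE W (\<lambda>v. hat_edges_between W E v (p v)))"

definition choice_mono :: "'v set \<Rightarrow> ('v \<Rightarrow> ('d::finite, 'v) hedge) \<Rightarrow> ('d, 'v) mono" where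
  "choice_mono W f = (\<Sum>v\<in>W. label_mono (f v))"

definition choice_coeff :: "'v set \<Rightarrow> ('v \<Rightarrow> ('d::finite, 'v) hedge) \<Rightarrow> complex" where
  "choice_coeff W f = (\<Prod>v\<in>W. label_coeff (f v))"

lemma edge_choices_permutes: "(p, f) \<in> edge_choices W E \<Longrightarrow> p permutes W"
  by (simp add: edge_choices_def)

lemma edge_choicesD:
  assumes "(p, f) \<in> edge_choices W E" "v \<in> W"
  shows "f v \<in> hat_edges W E" "head (f v) = v" "tail (f v) = p v"
  using assms by (auto simp: edge_choices_def hat_edges_between_def)

lemma finite_edge_choices:
  assumes "periodic_graph W E"
  shows "finite (edge_choices W E)"
proof -
  have "finite W" "finite (hat_edges_between W E v u)" for v u
    using assms finite_hat_edges[OF assms] by (auto simp: periodic_graph_def hat_edges_between_def)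
  then show ?thesis
    unfolding edge_choices_def by (intro finite_SigmaI finite_PiE) (auto simp: finite_permutations)
qed

lemma dispersion_eq_sum_edge_choices:
  assumes pg: "periodic_graph W E"
  shows "dispersion W E = (\<Sum>(p, f)\<in>edge_choices W E.
    Poly_Mapping.single (choice_mono W f) (of_int (sign p) * choice_coeff W f))"
proof -
  have fin: "finite W" "finite (hat_edges_between W E v u)" for v u
    using pg finite_hat_edges[OF pg] by (auto simp: periodic_graph_def hat_edges_between_def)
  have "dispersion W E = (\<Sum>p | p permutes W. of_int (sign p) *
      (\<Prod>v\<in>W. \<Sum>x\<in>hat_edges_between W E v (p v). label x))"
    unfolding dispersion_def det_on_def
    by (intro sum.cong refl) (simp add: char_mat_eq_sum_labels[OF pg] permutes_in_image)
  also have "\<dots> = (\<Sum>p | p permutes W. \<Sum>f\<in>PiE W (\<lambda>v. hat_edges_between W E v (p v)).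
      of_int (sign p) * (\<Prod>v\<in>W. label (f v)))"
    by (simp add: prod_sum_PiE fin sum_distrib_left)
  also have "\<dots> = (\<Sum>(p, f)\<in>edge_choices W E. of_int (sign p) * (\<Prod>v\<in>W. label (f v)))"
    unfolding edge_choices_def
    by (subst sum.Sigma) (auto simp: fin finite_permutations finite_PiE)
  also have "\<dots> = (\<Sum>(p, f)\<in>edge_choices W E.
      Poly_Mapping.single (choice_mono W f) (of_int (sign p) * choice_coeff W f))"
    by (intro sum.cong refl) (auto simp: label_def monomial_def choice_mono_def
        choice_coeff_def prod_single[OF fin(1)] mult_single simp flip: single_of_int)
  finally show ?thesis .
qed

lemma lookup_var_mono: "Poly_Mapping.lookup (var_mono y) x = (if y = x then 1 else 0)"
  by (simp add: var_mono_def lookup_single when_def)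

lemma lookup_z_mono:
  "Poly_Mapping.lookup (z_mono a :: ('d::finite, 'v) mono) x = (case x of Zv i \<Rightarrow> a $ i | _ \<Rightarrow> 0)"
  by (cases x) (simp_all add: z_mono_def lookup_sum lookup_single when_def)

lemma lookup_label_mono_Vv:
  "Poly_Mapping.lookup (label_mono x) (Vv w) = (if x = VLoop w then 1 else 0)"
  by (cases x) (auto simp: lookup_add lookup_var_mono lookup_z_mono)

lemma lookup_label_mono_Ev:
  "Poly_Mapping.lookup (label_mono x) (Ev o') =
    (if \<exists>v a u. x = Edge v a u \<and> edge_orbit (v, a, u) = o' then 1 else 0)"
  by (cases x) (auto simp: lookup_add lookup_var_mono lookup_z_mono)

lemma lookup_choice_mono_Vv:
  assumes "(p, f) \<in> edge_choices W E" "w \<in> W" "finite W"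
  shows "Poly_Mapping.lookup (choice_mono W f) (Vv w) = (if f w = VLoop w then 1 else 0)"
proof -
  have "f v \<noteq> VLoop w" if "v \<in> W" "v \<noteq> w" for v
    using edge_choicesD(2)[OF assms(1) that(1)] that(2) by auto
  then have "Poly_Mapping.lookup (choice_mono W f) (Vv w) =
      (\<Sum>v\<in>W. if v = w then (if f w = VLoop w then 1 else 0) else 0)"
    unfolding choice_mono_def lookup_sum lookup_label_mono_Vv by (intro sum.cong) auto
  then show ?thesis
    using assms(2,3) by simp
qed

lemma lookup_choice_mono_Ev_eq_0_iff:
  assumes "finite W"
  shows "Poly_Mapping.lookup (choice_mono W f) (Ev o') = 0 \<longleftrightarrow>
    (\<forall>v\<in>W. \<nexists>w a u. f v = Edge w a u \<and> edge_orbit (w, a, u) = o')"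
  using assms by (simp add: choice_mono_def lookup_sum lookup_label_mono_Ev sum_nonneg_eq_0_iff)

lemma edge_orbit_eq_imp_same_ends:
  assumes "edge_orbit (v, a, u) = edge_orbit (w, b, u')"
  shows "{v, u} = {w, u'}"
proof -
  have "(v, a, u) \<in> edge_orbit (w, b, u')"
    unfolding assms[symmetric] by (simp add: edge_orbit_def)
  then show ?thesis
    by (auto simp: edge_orbit_def)
qed

lemma edge_choice_Edge:
  assumes "(p, f) \<in> edge_choices W E" "v \<in> W" "f v \<notin> {LamLoop v, VLoop v}"
  obtains a where "f v = Edge v a (p v)"
  using edge_choicesD[OF assms(1,2)] assms(3) by (cases "f v") auto

lemma edge_choice_loop:
  assumes "(p, f) \<in> edge_choices W E" "v \<in> W" "f v \<in> {LamLoop v, VLoop v}"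
  shows "p v = v"
  using edge_choicesD[OF assms(1,2)] assms(3) by auto

lemma same_choice_mono_Edge:
  assumes fin: "finite W" and c: "(p, f) \<in> edge_choices W E" and c': "(p', f') \<in> edge_choices W E"
    and same: "choice_mono W f = choice_mono W f'"
    and v: "v \<in> W" "f v = Edge v a (p v)"
  obtains y where "y \<in> W" "{v, p v} = {y, p' y}"
proof -
  have "Poly_Mapping.lookup (choice_mono W f') (Ev (edge_orbit (v, a, p v))) \<noteq> 0"
    using v same lookup_choice_mono_Ev_eq_0_iff[OF fin] by metis
  then obtain y w b u where y: "y \<in> W" "f' y = Edge w b u"
    and orbit: "edge_orbit (w, b, u) = edge_orbit (v, a, p v)"
    using lookup_choice_mono_Ev_eq_0_iff[OF fin] by blast
  have "w = y" "u = p' y"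
    using edge_choicesD(2,3)[OF c' y(1)] y(2) by simp_all
  then show ?thesis
    using that[OF y(1)] edge_orbit_eq_imp_same_ends[OF orbit] by simp
qed

lemma fixed_point_if_same_choice_mono:
  assumes fin: "finite W" and c: "(p, f) \<in> edge_choices W E" and c': "(p', f') \<in> edge_choices W E"
    and same: "choice_mono W f = choice_mono W f'"
    and v: "v \<in> W" "p' v = v"
  shows "p v = v"
proof (rule ccontr)
  assume "p v \<noteq> v"
  then have "f v \<notin> {LamLoop v, VLoop v}"
    using edge_choice_loop[OF c v(1)] by blast
  then obtain a where "f v = Edge v a (p v)"
    using edge_choice_Edge[OF c v(1)] by blast
  then obtain y where "y \<in> W" "{v, p v} = {y, p' y}"
    using same_choice_mono_Edge[OF fin c c' same v(1)] by blast
  with \<open>p v \<noteq> v\<close> v(2) have "p' y = p' v" "y \<noteq> v"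
    by (auto simp: doubleton_eq_iff)
  then show False
    using permutes_inj[OF edge_choices_permutes[OF c']] by (simp add: inj_eq)
qed

lemma undirected_edges_subset_if_same_choice_mono:
  assumes fin: "finite W" and c: "(p, f) \<in> edge_choices W E" and c': "(p', f') \<in> edge_choices W E"
    and same: "choice_mono W f = choice_mono W f'"
  shows "(\<lambda>v. {v, p' v}) ` W \<subseteq> (\<lambda>v. {v, p v}) ` W"
proof -
  have "\<exists>y\<in>W. {v, p' v} = {y, p y}" if v: "v \<in> W" for v
  proof (cases "p' v = v")
    case True
    then show ?thesis
      using fixed_point_if_same_choice_mono[OF fin c c' same v True] v by auto
  next
    case False
    then have "f' v \<notin> {LamLoop v, VLoop v}"
      using edge_choice_loop[OF c' v] by blast
    then obtain a where "f' v = Edge v a (p' v)"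
      using edge_choice_Edge[OF c' v] by blast
    then show ?thesis
      using same_choice_mono_Edge[OF fin c' c same[symmetric] v] by metis
  qed
  then show ?thesis
    by blast
qed

lemma choice_coeff_eq_if_same_choice_mono:
  assumes fin: "finite W" and c: "(p, f) \<in> edge_choices W E" and c': "(p', f') \<in> edge_choices W E"
    and same: "choice_mono W f = choice_mono W f'"
  shows "choice_coeff W f = choice_coeff W f'"
proof -
  have label_coeff: "label_coeff (g v) = (if g v = VLoop v then -1 else 1)"
    if "(q, g) \<in> edge_choices W E" "v \<in> W" for q g v
    using edge_choicesD(2)[OF that] by (cases "g v") auto
  have "f v = VLoop v \<longleftrightarrow> f' v = VLoop v" if "v \<in> W" for v
    using lookup_choice_mono_Vv[OF c that fin] lookup_choice_mono_Vv[OF c' that fin] same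
    by (auto split: if_splits)
  then show ?thesis
    unfolding choice_coeff_def by (intro prod.cong) (simp_all add: label_coeff[OF c] label_coeff[OF c'])
qed

lemma choice_coeff_nonzero:
  assumes "finite W"
  shows "choice_coeff W f \<noteq> 0"
proof -
  have "label_coeff (f v) \<noteq> 0" for v
    by (cases "f v") simp_all
  then show ?thesis
    using assms by (simp add: choice_coeff_def)
qed

lemma edge_choice_term_eq_if_same_choice_mono:
  assumes fin: "finite W" and c: "(p, f) \<in> edge_choices W E" and c': "(p', f') \<in> edge_choices W E"
    and same: "choice_mono W f = choice_mono W f'"
  shows "of_int (sign p) * choice_coeff W f = of_int (sign p') * choice_coeff W f'"
proof -
  have "(\<lambda>v. {v, p v}) ` W = (\<lambda>v. {v, p' v}) ` W"
    using undirected_edges_subset_if_same_choice_mono[OF fin c c' same]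
      undirected_edges_subset_if_same_choice_mono[OF fin c' c same[symmetric]] by blast
  then have "sign p = sign p'"
    using sign_eq_if_same_undirected_edges[OF fin edge_choices_permutes[OF c] edge_choices_permutes[OF c']]
    by blast
  then show ?thesis
    using choice_coeff_eq_if_same_choice_mono[OF fin c c' same] by simp
qed

lemma keys_dispersion:
  fixes E :: "('d::finite, 'v) etriple set"
  assumes pg: "periodic_graph W E"
  shows "Poly_Mapping.keys (dispersion W E) = (\<lambda>(p, f). choice_mono W f) ` edge_choices W E"
proof -
  have fin: "finite W"
    using pg by (simp add: periodic_graph_def)
  define t :: "('v \<Rightarrow> 'v) \<times> ('v \<Rightarrow> ('d, 'v) hedge) \<Rightarrow> complex"
    where "t = (\<lambda>(p, f). of_int (sign p) * choice_coeff W f)"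
  define C where "C m = {c \<in> edge_choices W E. choice_mono W (snd c) = m}" for m
  have lookup_dispersion: "Poly_Mapping.lookup (dispersion W E) m = (\<Sum>c\<in>C m. t c)" for m
    using finite_edge_choices[OF pg] unfolding dispersion_eq_sum_edge_choices[OF pg]
    by (simp add: lookup_sum lookup_single when_def split_beta t_def C_def sum.inter_filter)
  have keys_iff: "m \<in> Poly_Mapping.keys (dispersion W E) \<longleftrightarrow> C m \<noteq> {}" for m
    unfolding in_keys_iff
  proof
    show "Poly_Mapping.lookup (dispersion W E) m \<noteq> 0 \<Longrightarrow> C m \<noteq> {}"
      by (auto simp: lookup_dispersion)
  next
    assume "C m \<noteq> {}"
    then obtain p0 f0 where c0: "(p0, f0) \<in> C m"
      by auto
    have "t c = t (p0, f0)" if "c \<in> C m" for c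
    proof -
      obtain p f where "c = (p, f)" "(p, f) \<in> edge_choices W E" "choice_mono W f = m"
        using \<open>c \<in> C m\<close> by (cases c) (auto simp: C_def)
      then show ?thesis
        using c0 edge_choice_term_eq_if_same_choice_mono[OF fin, of p f E p0 f0] by (auto simp: C_def t_def)
    qed
    then have "Poly_Mapping.lookup (dispersion W E) m = of_nat (card (C m)) * t (p0, f0)"
      by (simp add: lookup_dispersion)
    moreover have "card (C m) \<noteq> 0"
      using c0 finite_edge_choices[OF pg] by (auto simp: C_def)
    ultimately show "Poly_Mapping.lookup (dispersion W E) m \<noteq> 0"
      using choice_coeff_nonzero[OF fin] by (simp add: t_def)
  qed
  then show ?thesis
    by (auto simp: keys_iff C_def) blast
qed

section \<open>Cycle covers and the Newton polytope\<close>

lemma cycle_cover_subset: "cycle_cover W E Z \<Longrightarrow> Z \<subseteq> hat_edges W E"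
  by (simp add: cycle_cover_def)

lemma finite_cycle_cover: "periodic_graph W E \<Longrightarrow> cycle_cover W E Z \<Longrightarrow> finite Z"
  by (rule finite_subset[OF cycle_cover_subset finite_hat_edges])

lemma cycle_cover_image_edge_choice:
  assumes c: "(p, f) \<in> edge_choices W E"
  shows "cycle_cover W E (f ` W)" "(\<Sum>x\<in>f ` W. label_mono x) = choice_mono W f"
proof -
  have p: "p permutes W"
    using edge_choices_permutes[OF c] .
  note D = edge_choicesD[OF c]
  have "inj_on f W"
  proof (rule inj_onI)
    fix v w assume "v \<in> W" "w \<in> W" "f v = f w"
    then show "v = w"
      by (metis D(2))
  qed
  then show "(\<Sum>x\<in>f ` W. label_mono x) = choice_mono W f"
    by (simp add: choice_mono_def sum.reindex)
  have "\<exists>!x. x \<in> f ` W \<and> tail x = v" if "v \<in> W" for v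
  proof -
    obtain w where w: "w \<in> W" "p w = v"
      using \<open>v \<in> W\<close> permutes_image[OF p] by (metis imageE)
    show ?thesis
    proof (rule ex1I[of _ "f w"])
      show "f w \<in> f ` W \<and> tail (f w) = v"
        using w D(3)[OF w(1)] by simp
      fix x assume "x \<in> f ` W \<and> tail x = v"
      then obtain w' where "w' \<in> W" "x = f w'" "p w' = p w"
        using w D(3) by auto
      then show "x = f w"
        using permutes_inj[OF p] by (simp add: inj_eq)
    qed
  qed
  moreover have "\<exists>!x. x \<in> f ` W \<and> head x = v" if "v \<in> W" for v
    using that D(2) by (intro ex1I[of _ "f v"]) auto
  moreover have "f ` W \<subseteq> hat_edges W E"
    using D(1) by blast
  ultimately show "cycle_cover W E (f ` W)"
    by (simp add: cycle_cover_def)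
qed

lemma cycle_cover_obtain_edge_choice:
  assumes pg: "periodic_graph W E" and Z: "cycle_cover W E Z"
  obtains p f where "(p, f) \<in> edge_choices W E" "Z = f ` W"
proof -
  have sub: "Z \<subseteq> hat_edges W E"
    and tail_unique: "\<And>v. v \<in> W \<Longrightarrow> \<exists>!x. x \<in> Z \<and> tail x = v"
    and head_unique: "\<And>v. v \<in> W \<Longrightarrow> \<exists>!x. x \<in> Z \<and> head x = v"
    using Z by (auto simp: cycle_cover_def)
  define f where "f v = (if v \<in> W then THE x. x \<in> Z \<and> head x = v else undefined)" for v
  have f: "f v \<in> Z" "head (f v) = v" if "v \<in> W" for v
    using theI'[OF head_unique[OF that]] that by (simp_all add: f_def)
  have "f (head x) = x" "head x \<in> W" if "x \<in> Z" for x
    using that f head_unique sub hat_edges_ends_in(1)[OF pg] by blast+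
  then have "Z = f ` W"
    using f(1) by (metis image_eqI image_subsetI subsetI subset_antisym)
  define p where "p v = (if v \<in> W then tail (f v) else v)" for v
  have p_in: "p v \<in> W" if "v \<in> W" for v
    using that f(1)[OF that] sub hat_edges_ends_in(2)[OF pg] by (auto simp: p_def)
  have "inj_on p W"
  proof (rule inj_onI)
    fix v w assume "v \<in> W" "w \<in> W" "p v = p w"
    then have "f v = f w"
      using tail_unique[OF p_in] f(1) by (metis p_def)
    then show "v = w"
      using f(2) \<open>v \<in> W\<close> \<open>w \<in> W\<close> by metis
  qed
  moreover have "finite W"
    using pg by (simp add: periodic_graph_def)
  ultimately have "p ` W = W"
    using p_in by (simp add: endo_inj_surj image_subsetI)
  then have "p permutes W"
    using \<open>inj_on p W\<close> by (intro bij_imp_permutes) (auto simp: bij_betw_def p_def)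
  moreover have "f \<in> PiE W (\<lambda>v. hat_edges_between W E v (p v))"
    using f sub by (auto simp: hat_edges_between_def p_def f_def)
  ultimately show ?thesis
    using that \<open>Z = f ` W\<close> by (auto simp: edge_choices_def)
qed

definition cover_point :: "('d::finite, 'v) hedge set \<Rightarrow> (real ^ 'd) \<times> real" where
  "cover_point Z = to_real (wt_zl_exp Z)"

lemma newton_polytope_dispersion:
  assumes pg: "periodic_graph W E"
  shows "newton_polytope (dispersion W E) = convex hull (cover_point ` Collect (cycle_cover W E))"
proof -
  have "zl_exp ` Poly_Mapping.keys (dispersion W E) = wt_zl_exp ` Collect (cycle_cover W E)"
  proof (intro equalityI subsetI)
    fix y assume "y \<in> zl_exp ` Poly_Mapping.keys (dispersion W E)"
    then obtain p f where "(p, f) \<in> edge_choices W E" "y = zl_exp (choice_mono W f)"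
      by (auto simp: keys_dispersion[OF pg])
    then show "y \<in> wt_zl_exp ` Collect (cycle_cover W E)"
      using cycle_cover_image_edge_choice by (metis image_eqI mem_Collect_eq wt_zl_exp_def)
  next
    fix y assume "y \<in> wt_zl_exp ` Collect (cycle_cover W E)"
    then obtain Z where "cycle_cover W E Z" "y = wt_zl_exp Z"
      by blast
    moreover obtain p f where "(p, f) \<in> edge_choices W E" "Z = f ` W"
      using cycle_cover_obtain_edge_choice[OF pg \<open>cycle_cover W E Z\<close>] .
    ultimately show "y \<in> zl_exp ` Poly_Mapping.keys (dispersion W E)"
      using cycle_cover_image_edge_choice(2)
      by (force simp: keys_dispersion[OF pg] wt_zl_exp_def)
  qed
  then have "to_real ` zl_exp ` Poly_Mapping.keys (dispersion W E) = to_real ` wt_zl_exp ` Collect (cycle_cover W E)"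
    by simp
  then show ?thesis
    by (simp add: newton_polytope_def cover_point_def image_image)
qed

section \<open>Exchanging the two loops at a vertex\<close>

lemma zl_exp_add: "zl_exp (m + n) = zl_exp m + zl_exp n"
  by (simp add: zl_exp_def lookup_add vec_eq_iff)

lemma zl_exp_var_mono_Lam: "zl_exp (var_mono Lam :: ('d::finite, 'v) mono) = (0, 1)"
  by (simp add: zl_exp_def lookup_var_mono vec_eq_iff)

lemma zl_exp_var_mono_Vv: "zl_exp (var_mono (Vv v) :: ('d::finite, 'v) mono) = 0"
  by (simp add: zl_exp_def lookup_var_mono vec_eq_iff zero_prod_def)

lemma wt_zl_exp_insert:
  "finite Z \<Longrightarrow> x \<notin> Z \<Longrightarrow> wt_zl_exp (insert x Z) = zl_exp (label_mono x) + wt_zl_exp Z"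
  by (simp add: wt_zl_exp_def zl_exp_add)

lemma wt_zl_exp_LamLoop_VLoop:
  assumes "finite Z" "LamLoop v \<notin> Z" "VLoop v \<notin> Z"
  shows "wt_zl_exp (insert (LamLoop v) Z) = wt_zl_exp (insert (VLoop v) Z) + (0, 1)"
  using assms by (simp add: wt_zl_exp_insert zl_exp_var_mono_Lam zl_exp_var_mono_Vv)

lemma snd_wt_zl_exp:
  fixes Z :: "('d::finite, 'v) hedge set"
  assumes "finite Z"
  shows "snd (wt_zl_exp Z) = int (card (Z \<inter> range LamLoop))"
proof -
  have "Poly_Mapping.lookup (label_mono x) Lam = (if x \<in> range LamLoop then 1 else 0)" for x :: "('d, 'v) hedge"
    by (cases x) (auto simp: lookup_add lookup_var_mono lookup_z_mono)
  then show ?thesis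
    using assms by (simp add: wt_zl_exp_def zl_exp_def lookup_sum sum.If_cases)
qed

lemma int_dot_add: "int_dot eta (x + y) = int_dot eta x + int_dot eta y"
  by (simp add: int_dot_def algebra_simps sum.distrib)

lemma eta_val_LamLoop_VLoop:
  assumes "finite Z" "LamLoop v \<notin> Z" "VLoop v \<notin> Z"
  shows "eta_val eta (insert (LamLoop v) Z) = eta_val eta (insert (VLoop v) Z) + snd eta"
  using assms by (simp add: eta_val_def wt_zl_exp_LamLoop_VLoop int_dot_add) (simp add: int_dot_def)

lemma cover_point_LamLoop_VLoop:
  assumes "finite Z" "LamLoop v \<notin> Z" "VLoop v \<notin> Z"
  shows "cover_point (insert (LamLoop v) Z) = cover_point (insert (VLoop v) Z) + (0, 1)"
  using assms by (simp add: cover_point_def wt_zl_exp_LamLoop_VLoop to_real_def vec_eq_iff)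

lemma ex1_insert_Diff:
  assumes "\<exists>!z. z \<in> Z \<and> g z = v" "x \<in> Z" "g y = g x"
  shows "\<exists>!z. z \<in> insert y (Z - {x}) \<and> g z = v"
  using assms by (cases "g x = v") (auto simp: Ex1_def)

lemma cycle_cover_replace:
  assumes "cycle_cover W E Z" "x \<in> Z" "y \<in> hat_edges W E" "head y = head x" "tail y = tail x"
  shows "cycle_cover W E (insert y (Z - {x}))"
  using assms ex1_insert_Diff[of Z head _ x y] ex1_insert_Diff[of Z tail _ x y]
  by (auto simp: cycle_cover_def)

lemma cycle_cover_loop_exchange:
  assumes pg: "periodic_graph W E" and Z: "cycle_cover W E Z"
    and x: "x \<in> Z" "x \<in> {LamLoop v, VLoop v}"
  obtains Z0 where "v \<in> W" "Z = insert x Z0" "finite Z0" "LamLoop v \<notin> Z0" "VLoop v \<notin> Z0"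
    "cycle_cover W E (insert (LamLoop v) Z0)" "cycle_cover W E (insert (VLoop v) Z0)"
proof
  define Z0 where "Z0 = Z - {x}"
  show "Z = insert x Z0" "finite Z0"
    using x(1) finite_cycle_cover[OF pg Z] by (auto simp: Z0_def)
  show "v \<in> W"
    using x cycle_cover_subset[OF Z] hat_edges_ends_in(1)[OF pg] by fastforce
  then have "\<exists>!z. z \<in> Z \<and> head z = v"
    using Z by (simp add: cycle_cover_def)
  moreover have "head x = v"
    using x(2) by auto
  ultimately have "z = x" if "z \<in> Z" "head z = v" for z
    using that x(1) by blast
  then show "LamLoop v \<notin> Z0" "VLoop v \<notin> Z0"
    by (auto simp: Z0_def)
  have "cycle_cover W E (insert y Z0)" if "y \<in> {LamLoop v, VLoop v}" for y
    using cycle_cover_replace[OF Z x(1), of y] that x(2) \<open>v \<in> W\<close>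
    by (auto simp: Z0_def hat_edges_def)
  then show "cycle_cover W E (insert (LamLoop v) Z0)" "cycle_cover W E (insert (VLoop v) Z0)"
    by simp_all
qed

section \<open>Faces exposed by eta\<close>

definition eta_minimal_cover ::
    "'v set \<Rightarrow> ('d::finite, 'v) etriple set \<Rightarrow> (int ^ 'd) \<times> int \<Rightarrow> ('d, 'v) hedge set \<Rightarrow> bool" where
  "eta_minimal_cover W E eta Z \<longleftrightarrow>
     cycle_cover W E Z \<and> (\<forall>Z'. cycle_cover W E Z' \<longrightarrow> eta_val eta Z \<le> eta_val eta Z')"

lemma in_initial_graph_iff:
  "x \<in> initial_graph W E eta \<longleftrightarrow> (\<exists>Z. eta_minimal_cover W E eta Z \<and> x \<in> Z)"
  using cycle_cover_subset by (auto simp: initial_graph_def eta_minimal_cover_def)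

lemma inner_cover_point: "to_real eta \<bullet> cover_point Z = real_of_int (eta_val eta Z)"
  by (simp add: cover_point_def eta_val_def to_real_def int_dot_def inner_vec_def)

lemma finite_cover_points:
  assumes "periodic_graph W E"
  shows "finite (cover_point ` Collect (cycle_cover W E))"
proof -
  have "Collect (cycle_cover W E) \<subseteq> Pow (hat_edges W E)"
    using cycle_cover_subset by blast
  then show ?thesis
    using finite_hat_edges[OF assms] by (meson finite_Pow_iff finite_imageI finite_subset)
qed

lemma cover_point_in_newton_polytope:
  "periodic_graph W E \<Longrightarrow> cycle_cover W E Z \<Longrightarrow> cover_point Z \<in> newton_polytope (dispersion W E)"
  by (simp add: newton_polytope_dispersion hull_inc)

lemma cover_point_in_exposed_face_iff:
  assumes pg: "periodic_graph W E" and Z: "cycle_cover W E Z"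
  shows "cover_point Z \<in> exposed_face eta (newton_polytope (dispersion W E)) \<longleftrightarrow>
    eta_minimal_cover W E eta Z"
proof
  assume face: "cover_point Z \<in> exposed_face eta (newton_polytope (dispersion W E))"
  have "eta_val eta Z \<le> eta_val eta Z'" if "cycle_cover W E Z'" for Z'
  proof -
    have "to_real eta \<bullet> cover_point Z \<le> to_real eta \<bullet> cover_point Z'"
      using face cover_point_in_newton_polytope[OF pg that] by (auto simp: exposed_face_def)
    then show ?thesis
      by (simp add: inner_cover_point)
  qed
  then show "eta_minimal_cover W E eta Z"
    using Z by (simp add: eta_minimal_cover_def)
next
  assume "eta_minimal_cover W E eta Z"
  then have "\<forall>p\<in>cover_point ` Collect (cycle_cover W E). to_real eta \<bullet> cover_point Z \<le> to_real eta \<bullet> p"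
    by (auto simp: eta_minimal_cover_def inner_cover_point)
  then have "to_real eta \<bullet> cover_point Z \<le> to_real eta \<bullet> y"
    if "y \<in> newton_polytope (dispersion W E)" for y
    using that unfolding newton_polytope_dispersion[OF pg] by (rule convex_hull_halfspace_ge)
  then show "cover_point Z \<in> exposed_face eta (newton_polytope (dispersion W E))"
    using cover_point_in_newton_polytope[OF pg Z] by (simp add: exposed_face_def)
qed

lemma eta_minimal_cover_point_in_exposed_face:
  assumes "periodic_graph W E" "eta_minimal_cover W E eta Z"
  shows "cover_point Z \<in> exposed_face eta (newton_polytope (dispersion W E))"
proof -
  have "cycle_cover W E Z"
    using assms(2) by (simp add: eta_minimal_cover_def)
  then show ?thesis
    using cover_point_in_exposed_face_iff[OF assms(1)] assms(2) by blast
qed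

lemma snd_nonneg_newton_polytope:
  assumes pg: "periodic_graph W E" and y: "y \<in> newton_polytope (dispersion W E)"
  shows "0 \<le> snd y"
proof -
  have "\<forall>p\<in>cover_point ` Collect (cycle_cover W E). 0 \<le> (0, 1) \<bullet> p"
    using snd_wt_zl_exp[OF finite_cycle_cover[OF pg]] by (simp add: cover_point_def to_real_def)
  then have "0 \<le> (0, 1) \<bullet> y"
    using y unfolding newton_polytope_dispersion[OF pg] by (rule convex_hull_halfspace_ge)
  then show ?thesis
    by (cases y) simp
qed

lemma exposes_vertical_face_imp_horizontal:
  assumes "exposes_vertical_face eta N"
  shows "snd eta = 0"
proof -
  obtain x t where "t \<noteq> 0" "x \<in> exposed_face eta N" "x + (0, t) \<in> exposed_face eta N"
    using assms by (auto simp: exposes_vertical_face_def vertical_def)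
  then have "to_real eta \<bullet> (x + (0, t)) = to_real eta \<bullet> x"
    by (auto simp: exposed_face_def intro: order.antisym)
  then show ?thesis
    using \<open>t \<noteq> 0\<close> by (simp add: inner_add_right to_real_def)
qed

lemma eta_minimal_cover_LamLoop_imp_nonpos:
  assumes pg: "periodic_graph W E" and Z: "eta_minimal_cover W E eta Z" "LamLoop v \<in> Z"
  shows "snd eta \<le> 0"
proof -
  obtain Z0 where "Z = insert (LamLoop v) Z0" "finite Z0" "LamLoop v \<notin> Z0" "VLoop v \<notin> Z0"
    "cycle_cover W E (insert (VLoop v) Z0)"
    using cycle_cover_loop_exchange[of W E Z "LamLoop v" v] pg Z by (auto simp: eta_minimal_cover_def)
  then show ?thesis
    using Z(1) eta_val_LamLoop_VLoop[of Z0 v eta] by (force simp: eta_minimal_cover_def)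
qed

lemma eta_minimal_cover_VLoop_imp_nonneg:
  assumes pg: "periodic_graph W E" and Z: "eta_minimal_cover W E eta Z" "VLoop v \<in> Z"
  shows "0 \<le> snd eta"
proof -
  obtain Z0 where "Z = insert (VLoop v) Z0" "finite Z0" "LamLoop v \<notin> Z0" "VLoop v \<notin> Z0"
    "cycle_cover W E (insert (LamLoop v) Z0)"
    using cycle_cover_loop_exchange[of W E Z "VLoop v" v] pg Z by (auto simp: eta_minimal_cover_def)
  then show ?thesis
    using Z(1) eta_val_LamLoop_VLoop[of Z0 v eta] by (force simp: eta_minimal_cover_def)
qed

lemma eta_minimal_cover_exchange_LamLoop:
  assumes pg: "periodic_graph W E" and Z: "eta_minimal_cover W E eta Z" "LamLoop v \<in> Z"
    and horizontal: "snd eta = 0"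
  obtains Z' where "v \<in> W" "eta_minimal_cover W E eta Z'" "VLoop v \<in> Z'"
    "cover_point Z = cover_point Z' + (0, 1)"
proof -
  obtain Z0 where Z0: "v \<in> W" "Z = insert (LamLoop v) Z0" "finite Z0" "LamLoop v \<notin> Z0" "VLoop v \<notin> Z0"
    "cycle_cover W E (insert (VLoop v) Z0)"
    using cycle_cover_loop_exchange[of W E Z "LamLoop v" v] pg Z by (auto simp: eta_minimal_cover_def)
  show ?thesis
  proof (rule that)
    show "eta_minimal_cover W E eta (insert (VLoop v) Z0)"
      using Z(1) Z0 horizontal eta_val_LamLoop_VLoop[of Z0 v eta] by (simp add: eta_minimal_cover_def)
    show "cover_point Z = cover_point (insert (VLoop v) Z0) + (0, 1)"
      using Z0 cover_point_LamLoop_VLoop by simp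
  qed (use Z0 in simp_all)
qed

lemma exposes_vertical_face_obtain_LamLoop_cover:
  assumes pg: "periodic_graph W E"
    and vertical: "exposes_vertical_face eta (newton_polytope (dispersion W E))"
  obtains Z v where "eta_minimal_cover W E eta Z" "LamLoop v \<in> Z"
proof -
  let ?P = "cover_point ` Collect (cycle_cover W E)"
  let ?F = "exposed_face eta (newton_polytope (dispersion W E))"
  obtain x t where "t \<noteq> 0" "x \<in> ?F" "x + (0, t) \<in> ?F"
    using vertical by (auto simp: exposes_vertical_face_def vertical_def)
  moreover from this have "0 \<le> snd x" "0 \<le> snd (x + (0, t))"
    using snd_nonneg_newton_polytope[OF pg, of x] snd_nonneg_newton_polytope[OF pg, of "x + (0, t)"]
    by (simp_all add: exposed_face_def)
  ultimately obtain y where y: "y \<in> ?F" "0 < snd y"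
    by (cases "0 < snd x") auto
  then have "y \<in> convex hull ?P" "\<forall>p\<in>?P. to_real eta \<bullet> y \<le> to_real eta \<bullet> p" "0 < (0, 1) \<bullet> y"
    using cover_point_in_newton_polytope[OF pg]
    by (auto simp: exposed_face_def newton_polytope_dispersion[OF pg] inner_prod_def)
  then obtain Z where Z: "cycle_cover W E Z" "to_real eta \<bullet> cover_point Z = to_real eta \<bullet> y"
    and lambda_pos: "0 < (0, 1) \<bullet> cover_point Z"
    using convex_hull_minimizer_witness[OF finite_cover_points[OF pg]] by blast
  have "cover_point Z \<in> ?F"
    using y(1) Z cover_point_in_newton_polytope[OF pg] by (auto simp: exposed_face_def)
  then have "eta_minimal_cover W E eta Z"
    using cover_point_in_exposed_face_iff[OF pg Z(1)] by blast
  moreover have "Z \<inter> range LamLoop \<noteq> {}"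
    using lambda_pos snd_wt_zl_exp[OF finite_cycle_cover[OF pg Z(1)]]
    by (auto simp: cover_point_def to_real_def)
  ultimately show ?thesis
    using that by blast
qed

lemma exposes_vertical_face_imp_loops_in_initial_graph:
  assumes pg: "periodic_graph W E"
    and vertical: "exposes_vertical_face eta (newton_polytope (dispersion W E))"
  shows "\<exists>v\<in>W. LamLoop v \<in> initial_graph W E eta \<and> VLoop v \<in> initial_graph W E eta"
proof -
  obtain Z v where Z: "eta_minimal_cover W E eta Z" "LamLoop v \<in> Z"
    using exposes_vertical_face_obtain_LamLoop_cover[OF pg vertical] .
  moreover obtain Z' where "v \<in> W" "eta_minimal_cover W E eta Z'" "VLoop v \<in> Z'"
    using eta_minimal_cover_exchange_LamLoop[OF pg Z exposes_vertical_face_imp_horizontal[OF vertical]] .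
  ultimately show ?thesis
    using in_initial_graph_iff by blast
qed

lemma loops_in_initial_graph_imp_exposes_vertical_face:
  assumes pg: "periodic_graph W E"
    and loops: "LamLoop v \<in> initial_graph W E eta" "VLoop v \<in> initial_graph W E eta"
  shows "exposes_vertical_face eta (newton_polytope (dispersion W E))"
proof -
  obtain Z1 Z2 where Z1: "eta_minimal_cover W E eta Z1" "LamLoop v \<in> Z1"
    and Z2: "eta_minimal_cover W E eta Z2" "VLoop v \<in> Z2"
    using loops in_initial_graph_iff by metis
  have "snd eta = 0"
    using eta_minimal_cover_LamLoop_imp_nonpos[OF pg Z1] eta_minimal_cover_VLoop_imp_nonneg[OF pg Z2]
    by simp
  then obtain Z' where Z': "eta_minimal_cover W E eta Z'" "cover_point Z1 = cover_point Z' + (0, 1)"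
    using eta_minimal_cover_exchange_LamLoop[OF pg Z1] by blast
  then have "cover_point Z' \<in> exposed_face eta (newton_polytope (dispersion W E))"
    "cover_point Z' + (0, 1) \<in> exposed_face eta (newton_polytope (dispersion W E))"
    using eta_minimal_cover_point_in_exposed_face[OF pg Z'(1)] eta_minimal_cover_point_in_exposed_face[OF pg Z1(1)]
    by simp_all
  then show ?thesis
    unfolding exposes_vertical_face_def vertical_def by (metis zero_neq_one)
qed

theorem theorem2p16:
  fixes W :: "'v set" and E :: "('d::finite, 'v) etriple set" and eta :: "(int ^ 'd) \<times> int"
  assumes "periodic_graph W E"
  shows "(exposes_vertical_face eta (newton_polytope (dispersion W E)) \<longleftrightarrow>
            (\<exists>v\<in>W. LamLoop v \<in> initial_graph W E eta \<and> VLoop v \<in> initial_graph W E eta))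
         \<and> (exposes_vertical_face eta (newton_polytope (dispersion W E)) \<longrightarrow> snd eta = 0)"
  using exposes_vertical_face_imp_loops_in_initial_graph[OF assms]
    loops_in_initial_graph_imp_exposes_vertical_face[OF assms]
    exposes_vertical_face_imp_horizontal
  by blast

end
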